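(* For every $1<B<\infty$: if $d\ge2$ then $\lambda_d(B)>\theta_d(B)$; and for every $d\ge1$, $\lambda_d(B)\ge\theta_d\big(B^{(d+1)/2}\big)$.
   Context: Gauss map $T(x)=1/x-\lfloor1/x\rfloor$ ($T(0)=0$). Pressure: $\mathsf P(T,\phi)=\lim_{n\to\infty}\frac1n\log\sum_{(a_1,\dots,a_n)\in\mathbb N^n}\sup_{x\in[0,1)}e^{S_n\phi([a_1,\dots,a_n+x])}$, $S_n\phi=\sum_{i=0}^{n-1}\phi\circ T^i$, where $[a_1,\dots,a_n+x]$ is the finite continued fraction with last entry $a_n+x$. Functions $g_1(s)=s$, $g_n(s)=\frac{s g_{n-1}(s)}{1-s+ng_{n-1}(s)}$; $f_1(s)=s$, $f_{k+1}(s)=\frac{s f_k(s)}{1-s+f_k(s)}$. For $B>1$: $\lambda_d(B)=\inf\{s\ge0:\mathsf P(T,-s\log|T'|-g_d(s)\log B)\le0\}$ and $\theta_d(B)=\inf\{s\ge0:\mathsf P(T,-f_d(s)\log B-s\log|T'|)\le0\}$. (The number $\theta_d(B)$ is the Hausdorff dimension of the set of $x$ with $a_{n+1}(x)\cdots a_{n+d}(x)\ge B^n$ for infinitely many $n$.) *)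

theory Defs
  imports "HOL-Analysis.Analysis"
begin

definition gauss :: "real \<Rightarrow> real" where
  "gauss x = (if x = 0 then 0 else 1 / x - of_int \<lfloor>1 / x\<rfloor>)"

definition gauss_deriv :: "real \<Rightarrow> real" where
  "gauss_deriv x = - 1 / x\<^sup>2"

text \<open>Finite continued fraction [a_1,...,a_n + x]; cf [] x = x.\<close>
fun cf :: "nat list \<Rightarrow> real \<Rightarrow> real" where
  "cf [] x = x"
| "cf (a # ws) x = 1 / (real a + cf ws x)"

definition birkhoff :: "nat \<Rightarrow> (real \<Rightarrow> real) \<Rightarrow> real \<Rightarrow> real" where
  "birkhoff n \<phi> y = (\<Sum>i<n. \<phi> ((gauss ^^ i) y))"

definition ln_enn :: "ennreal \<Rightarrow> ereal" where
  "ln_enn z = (if z = 0 then MInfty else if z = top then PInfty else ereal (ln (enn2real z)))"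

definition words :: "nat \<Rightarrow> nat list set" where
  "words n = {ws. length ws = n \<and> (\<forall>a\<in>set ws. 1 \<le> a)}"

definition partition_fun :: "(real \<Rightarrow> real) \<Rightarrow> nat \<Rightarrow> ennreal" where
  "partition_fun \<phi> n =
     (\<integral>\<^sup>+ ws. (SUP x\<in>{0..<1}. ennreal (exp (birkhoff n \<phi> (cf ws x)))) \<partial>count_space (words n))"

definition pressure :: "(real \<Rightarrow> real) \<Rightarrow> ereal" where
  "pressure \<phi> = lim (\<lambda>n. ln_enn (partition_fun \<phi> n) / ereal (real n))"

text \<open>g_1(s) = s, g_n(s) = s g_{n-1}(s) / (1 - s + n g_{n-1}(s)) (g 0 is an unused dummy).\<close>
fun g :: "nat \<Rightarrow> real \<Rightarrow> real" where
  "g 0 s = 0"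
| "g (Suc 0) s = s"
| "g (Suc (Suc n)) s = s * g (Suc n) s / (1 - s + real (Suc (Suc n)) * g (Suc n) s)"

text \<open>f_1(s) = s, f_{k+1}(s) = s f_k(s) / (1 - s + f_k(s)) (f 0 is an unused dummy).\<close>
fun f :: "nat \<Rightarrow> real \<Rightarrow> real" where
  "f 0 s = 0"
| "f (Suc 0) s = s"
| "f (Suc (Suc k)) s = s * f (Suc k) s / (1 - s + f (Suc k) s)"

definition lambda_d :: "nat \<Rightarrow> real \<Rightarrow> real" where
  "lambda_d d B = Inf {s. 0 \<le> s \<and>
     pressure (\<lambda>x. - s * ln \<bar>gauss_deriv x\<bar> - g d s * ln B) \<le> 0}"

definition theta_d :: "nat \<Rightarrow> real \<Rightarrow> real" where
  "theta_d d B = Inf {s. 0 \<le> s \<and>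
     pressure (\<lambda>x. - f d s * ln B - s * ln \<bar>gauss_deriv x\<bar>) \<le> 0}"

end

theory Submission
  imports Defs
begin

text \<open>
  For a word w = (a_1, ..., a_n) let q_w(x) be the denominator of [a_1, ..., a_n + x]. Along the
  orbit of [a_1, ..., a_n + x] the Birkhoff sum of -s log|T'| equals -2s log q_w(x); moreover q_w
  varies by at most a factor 2 in x and is multiplicative up to a factor 2 under concatenation of
  words. Hence the pressure of -s log|T'| - c is +\<infinity> for s \<le> 1/2 and P(s) - c for s > 1/2, where
  P(s) = lim (1/n) log \<Sum>_w q_w(0)^(-2s) exists by almost additivity. By Hoelder's inequality P is
  convex, hence continuous, on (1/2, \<infinity>), and P(s) \<rightarrow> \<infinity> as s \<down> 1/2.

  So \<lambda>_d(B) and \<theta>_d(B) are the infima of {s > 1/2. P(s) \<le> g_d(s) log B} and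
  {s > 1/2. P(s) \<le> f_d(s) log B}. Solving the recursions gives g_d(s) = s / \<Sum>_{j<d} (d - j) r^j and
  f_d(s) = s / \<Sum>_{j<d} r^j with r = (1 - s)/s > -1, and alternating-sum estimates yield
  g_d < f_d for d \<ge> 2 and g_d \<le> (d + 1)/2 f_d. The second inequality of the theorem follows by
  inclusion of the sets; for the first, P(\<lambda>_d(B)) \<le> g_d(\<lambda>_d(B)) log B < f_d(\<lambda>_d(B)) log B,
  so by continuity points slightly below \<lambda>_d(B) lie in the second set.
\<close>

section \<open>Continuants\<close>

fun cf_denom :: "nat list \<Rightarrow> real \<Rightarrow> real" where
  "cf_denom [] x = 1"
| "cf_denom (a # w) x = real a * cf_denom w x + (case w of [] \<Rightarrow> x | b # w' \<Rightarrow> cf_denom w' x)"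

definition cf_numer :: "nat list \<Rightarrow> real \<Rightarrow> real" where
  "cf_numer w x = (case w of [] \<Rightarrow> x | b # w' \<Rightarrow> cf_denom w' x)"

lemma cf_numer_simps [simp]: "cf_numer [] x = x" "cf_numer (b # w) x = cf_denom w x"
  by (simp_all add: cf_numer_def)

lemma cf_denom_Cons: "cf_denom (a # w) x = real a * cf_denom w x + cf_numer w x"
  by (simp add: cf_numer_def)

declare cf_denom.simps(2) [simp del]

definition admissible :: "nat list \<Rightarrow> bool" where
  "admissible w \<longleftrightarrow> (\<forall>a\<in>set w. 1 \<le> a)"

lemma admissible_simps [simp]:
  "admissible []" "admissible (a # w) \<longleftrightarrow> 1 \<le> a \<and> admissible w"
  by (auto simp: admissible_def)

lemma admissible_append [simp]: "admissible (u @ v) \<longleftrightarrow> admissible u \<and> admissible v"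
  by (auto simp: admissible_def)

lemma admissible_drop: "admissible w \<Longrightarrow> admissible (drop i w)"
  by (auto simp: admissible_def dest: in_set_dropD)

lemma mem_words_iff: "w \<in> words n \<longleftrightarrow> length w = n \<and> admissible w"
  by (auto simp: words_def admissible_def)

lemma cf_denom_numer_bounds:
  "0 \<le> x \<Longrightarrow> admissible w \<Longrightarrow> 1 \<le> cf_denom w x \<and> 0 \<le> cf_numer w x"
proof (induction w)
  case (Cons a w)
  then have "1 \<le> cf_denom w x" "0 \<le> cf_numer w x" "1 \<le> a" by auto
  moreover from calculation have "1 * 1 \<le> real a * cf_denom w x"
    by (intro mult_mono) auto
  ultimately show ?case by (simp add: cf_denom_Cons)
qed simp

lemma cf_denom_ge_1: "0 \<le> x \<Longrightarrow> admissible w \<Longrightarrow> 1 \<le> cf_denom w x"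
  using cf_denom_numer_bounds by blast

lemma cf_eq_numer_div_denom:
  "0 \<le> x \<Longrightarrow> admissible w \<Longrightarrow> cf w x = cf_numer w x / cf_denom w x"
proof (induction w)
  case (Cons a w)
  then have "1 \<le> cf_denom w x" "0 \<le> cf_numer w x"
    using cf_denom_numer_bounds by auto
  moreover have "cf (a # w) x = 1 / (real a + cf_numer w x / cf_denom w x)"
    using Cons by simp
  ultimately show ?case by (simp add: cf_denom_Cons field_simps)
qed simp

lemma cf_nonneg: "0 \<le> x \<Longrightarrow> admissible w \<Longrightarrow> 0 \<le> cf w x"
  using cf_denom_numer_bounds[of x w] by (simp add: cf_eq_numer_div_denom)

lemma cf_pos: "0 \<le> x \<Longrightarrow> admissible w \<Longrightarrow> w \<noteq> [] \<Longrightarrow> 0 < cf w x"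
  by (cases w) (auto simp: add_pos_nonneg cf_nonneg)

lemma cf_le_1: "0 \<le> x \<Longrightarrow> x < 1 \<Longrightarrow> admissible w \<Longrightarrow> cf w x \<le> 1"
proof (cases w)
  case (Cons a v)
  moreover assume "0 \<le> x" "admissible w"
  ultimately show ?thesis using cf_nonneg[of x v] by (simp add: field_simps)
qed simp

lemma cf_eq_1:
  assumes "0 \<le> x" "x < 1" "admissible w" "cf w x = 1"
  shows "w = [1] \<and> x = 0"
proof (cases w)
  case (Cons a v)
  with assms have "real a + cf v x = 1" "1 \<le> a" "0 \<le> cf v x"
    using cf_nonneg[of x v] by (auto simp: field_simps)
  then have "a = 1" "cf v x = 0" by linarith+
  with Cons assms cf_pos[of x v] show ?thesis by (cases v) auto
qed (use assms in simp)

lemma prod_cf_drop: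
  "0 \<le> x \<Longrightarrow> admissible w \<Longrightarrow> (\<Prod>i<length w. cf (drop i w) x) = 1 / cf_denom w x"
proof (induction w)
  case (Cons a w)
  have "(\<Prod>i<length (a # w). cf (drop i (a # w)) x) = cf (a # w) x * (1 / cf_denom w x)"
    using Cons unfolding length_Cons prod.lessThan_Suc_shift by simp
  also have "\<dots> = cf_denom w x / cf_denom (a # w) x * (1 / cf_denom w x)"
    using Cons by (simp add: cf_eq_numer_div_denom[of x "a # w"] del: cf.simps)
  also have "\<dots> = 1 / cf_denom (a # w) x"
    using Cons cf_denom_ge_1[of x w] by simp
  finally show ?case .
qed simp

section \<open>Orbits of the Gauss map and Birkhoff sums\<close>

lemma gauss_cf_Cons: "0 \<le> t \<Longrightarrow> t < 1 \<Longrightarrow> 1 \<le> a \<Longrightarrow> gauss (1 / (real a + t)) = t"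
  unfolding gauss_def by (simp add: floor_unique add_pos_nonneg)

lemma gauss_nonneg: "0 \<le> gauss x"
  unfolding gauss_def by simp

lemma gauss_iter_nonneg: "0 \<le> y \<Longrightarrow> 0 \<le> (gauss ^^ i) y"
  by (cases i) (auto simp: gauss_nonneg)

lemma ln_abs_gauss_deriv: "0 \<le> z \<Longrightarrow> ln \<bar>gauss_deriv z\<bar> = - 2 * ln z"
  by (cases "z = 0") (simp_all add: gauss_deriv_def ln_div ln_realpow)

(* For x = 0 and a word ending in 1 the orbit reaches 0 where the continued fraction would
   give 1; this is harmless because ln 0 = 0 = ln 1 in Isabelle. *)
lemma ln_gauss_iter_cf:
  "0 \<le> x \<Longrightarrow> x < 1 \<Longrightarrow> admissible w \<Longrightarrow> i < length w \<Longrightarrow>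
     ln ((gauss ^^ i) (cf w x)) = ln (cf (drop i w) x)"
proof (induction w arbitrary: i)
  case (Cons a w)
  show ?case
  proof (cases i)
    case (Suc j)
    have a: "1 \<le> a" and w: "admissible w" using Cons.prems by auto
    show ?thesis
    proof (cases "cf w x = 1")
      case False
      with Cons.prems w have "gauss (cf (a # w) x) = cf w x"
        by (simp add: gauss_cf_Cons cf_nonneg cf_le_1 less_le)
      with Cons Suc show ?thesis by (simp add: funpow_Suc_right del: funpow.simps)
    next
      case True
      then have "w = [1]" "x = 0" using cf_eq_1 Cons.prems w by blast+
      moreover have "gauss (1 / (real a + 1)) = 0"
        unfolding gauss_def by simp
      ultimately show ?thesis using Cons.prems Suc by (simp add: funpow_Suc_right del: funpow.simps)
    qed
  qed simp
qed simp

lemma birkhoff_cf: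
  assumes x: "0 \<le> x" "x < 1" and w: "admissible w"
  shows "exp (birkhoff (length w) (\<lambda>z. - s * ln \<bar>gauss_deriv z\<bar> - c) (cf w x))
         = exp (- c * real (length w)) * cf_denom w x powr (- 2 * s)"
proof -
  let ?n = "length w"
  have "birkhoff ?n (\<lambda>z. - s * ln \<bar>gauss_deriv z\<bar> - c) (cf w x)
      = (\<Sum>i<?n. 2 * s * ln (cf (drop i w) x) - c)"
    unfolding birkhoff_def
    using ln_gauss_iter_cf[OF x w] ln_abs_gauss_deriv[OF gauss_iter_nonneg[OF cf_nonneg[OF x(1) w]]]
    by (intro sum.cong) auto
  also have "\<dots> = 2 * s * (\<Sum>i<?n. ln (cf (drop i w) x)) - c * ?n"
    by (simp add: sum_subtractf sum_distrib_left)
  also have "(\<Sum>i<?n. ln (cf (drop i w) x)) = ln (\<Prod>i<?n. cf (drop i w) x)"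
  proof (rule ln_prod[symmetric])
    show "cf (drop i w) x \<noteq> 0" if "i \<in> {..<?n}" for i
      using that cf_pos[OF x(1) admissible_drop[OF w], of i] by simp
  qed simp
  also have "\<dots> = - ln (cf_denom w x)"
    using cf_denom_ge_1[OF x(1) w] by (simp add: prod_cf_drop[OF x(1) w] ln_div)
  finally show ?thesis
    using cf_denom_ge_1[OF x(1) w] by (simp add: powr_def algebra_simps flip: exp_add)
qed

section \<open>Distortion of continuant denominators\<close>

lemma cf_denom_numer_affine:
  "cf_denom w x = cf_denom w 0 + x * (cf_denom w 1 - cf_denom w 0) \<and>
   cf_numer w x = cf_numer w 0 + x * (cf_numer w 1 - cf_numer w 0)"
proof (induction w)
  case (Cons a w)
  then have q: "cf_denom w x = cf_denom w 0 + x * (cf_denom w 1 - cf_denom w 0)"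
    and p: "cf_numer w x = cf_numer w 0 + x * (cf_numer w 1 - cf_numer w 0)" by auto
  show ?case unfolding cf_denom_Cons cf_numer_simps q p by (simp add: algebra_simps)
qed simp

lemma cf_denom_numer_increments:
  "admissible w \<Longrightarrow>
     0 \<le> cf_denom w 1 - cf_denom w 0 \<and> 0 \<le> cf_numer w 1 - cf_numer w 0 \<and>
     cf_denom w 1 - cf_denom w 0 \<le> cf_denom w 0 \<and>
     (cf_denom w 1 - cf_denom w 0) + (cf_numer w 1 - cf_numer w 0) \<le> cf_denom w 0 + cf_numer w 0"
proof (induction w)
  case (Cons a w)
  then have h: "0 \<le> cf_denom w 1 - cf_denom w 0" "0 \<le> cf_numer w 1 - cf_numer w 0"
    "cf_denom w 1 - cf_denom w 0 \<le> cf_denom w 0"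
    "(cf_denom w 1 - cf_denom w 0) + (cf_numer w 1 - cf_numer w 0) \<le> cf_denom w 0 + cf_numer w 0"
    "1 \<le> a" by auto
  have "(real a - 1) * (cf_denom w 1 - cf_denom w 0) \<le> (real a - 1) * cf_denom w 0"
    using h by (intro mult_left_mono) auto
  then have "real a * cf_denom w 1 - real a * cf_denom w 0 - cf_denom w 1 + cf_denom w 0
      \<le> real a * cf_denom w 0 - cf_denom w 0"
    by (simp add: algebra_simps)
  moreover have "real a * cf_denom w 0 \<le> real a * cf_denom w 1" using h by simp
  ultimately show ?case using h unfolding cf_denom_Cons cf_numer_simps by linarith
qed simp

lemma cf_denom_bounds:
  assumes "admissible w" "0 \<le> x" "x \<le> 1"
  shows "cf_denom w 0 \<le> cf_denom w x" "cf_denom w x \<le> 2 * cf_denom w 0"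
proof -
  have "0 \<le> cf_denom w 1 - cf_denom w 0" "cf_denom w 1 - cf_denom w 0 \<le> cf_denom w 0"
    using cf_denom_numer_increments[OF assms(1)] by auto
  moreover from calculation have "x * (cf_denom w 1 - cf_denom w 0) \<le> 1 * cf_denom w 0"
    using assms by (intro mult_mono) auto
  ultimately show "cf_denom w 0 \<le> cf_denom w x" "cf_denom w x \<le> 2 * cf_denom w 0"
    using assms cf_denom_numer_affine[of w x] by auto
qed

lemma cf_denom_append:
  "admissible v \<Longrightarrow> 0 \<le> x \<Longrightarrow>
     cf_denom (u @ v) x = cf_denom u (cf v x) * cf_denom v x \<and>
     cf_numer (u @ v) x = cf_numer u (cf v x) * cf_denom v x"
proof (induction u)
  case Nil
  then show ?case using cf_denom_ge_1[of x v] by (simp add: cf_eq_numer_div_denom)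
qed (simp add: cf_denom_Cons algebra_simps)

lemma cf_denom_append_bounds:
  assumes "admissible u" "admissible v"
  shows "cf_denom u 0 * cf_denom v 0 \<le> cf_denom (u @ v) 0"
    and "cf_denom (u @ v) 0 \<le> 2 * (cf_denom u 0 * cf_denom v 0)"
proof -
  have t: "0 \<le> cf v 0" "cf v 0 \<le> 1" using cf_nonneg cf_le_1 assms(2) by auto
  have "cf_denom (u @ v) 0 = cf_denom u (cf v 0) * cf_denom v 0"
    using cf_denom_append[OF assms(2)] by simp
  with cf_denom_bounds[OF assms(1) t] cf_denom_ge_1[OF _ assms(2), of 0]
  show "cf_denom u 0 * cf_denom v 0 \<le> cf_denom (u @ v) 0"
    and "cf_denom (u @ v) 0 \<le> 2 * (cf_denom u 0 * cf_denom v 0)"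
    by auto
qed

section \<open>The partition function of the geometric potential\<close>

definition denom_sum :: "nat \<Rightarrow> real \<Rightarrow> ennreal" where
  "denom_sum n s = (\<integral>\<^sup>+ w. ennreal (cf_denom w 0 powr (- 2 * s)) \<partial>count_space (words n))"

lemma SUP_birkhoff_cf:
  assumes w: "w \<in> words n" and s: "0 \<le> s"
  shows "(SUP x\<in>{0..<1}. ennreal (exp (birkhoff n (\<lambda>z. - s * ln \<bar>gauss_deriv z\<bar> - c) (cf w x))))
       = ennreal (exp (- c * real n) * cf_denom w 0 powr (- 2 * s))"
proof -
  have w': "admissible w" "length w = n" using w by (auto simp: mem_words_iff)
  have e: "exp (birkhoff n (\<lambda>z. - s * ln \<bar>gauss_deriv z\<bar> - c) (cf w x))
         = exp (- c * real n) * cf_denom w x powr (- 2 * s)" if "x \<in> {0..<1}" for x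
    using birkhoff_cf[of x w s c] that w' by auto
  have le: "cf_denom w x powr (- 2 * s) \<le> cf_denom w 0 powr (- 2 * s)" if "x \<in> {0..<1}" for x
    using that s cf_denom_bounds(1)[OF w'(1), of x] cf_denom_ge_1[OF _ w'(1), of 0]
    by (intro powr_mono2') auto
  show ?thesis
  proof (rule antisym)
    show "(SUP x\<in>{0..<1}. ennreal (exp (birkhoff n (\<lambda>z. - s * ln \<bar>gauss_deriv z\<bar> - c) (cf w x))))
      \<le> ennreal (exp (- c * real n) * cf_denom w 0 powr (- 2 * s))"
      using e le by (intro SUP_least ennreal_leI) (simp add: mult_left_mono)
    show "ennreal (exp (- c * real n) * cf_denom w 0 powr (- 2 * s))
       \<le> (SUP x\<in>{0..<1}. ennreal (exp (birkhoff n (\<lambda>z. - s * ln \<bar>gauss_deriv z\<bar> - c) (cf w x))))"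
      using e[of 0] by (intro SUP_upper2[of 0]) auto
  qed
qed

lemma partition_fun_eq_denom_sum:
  assumes "0 \<le> s"
  shows "partition_fun (\<lambda>z. - s * ln \<bar>gauss_deriv z\<bar> - c) n
    = ennreal (exp (- c * real n)) * denom_sum n s"
proof -
  have "partition_fun (\<lambda>z. - s * ln \<bar>gauss_deriv z\<bar> - c) n
     = (\<integral>\<^sup>+ w. ennreal (exp (- c * real n)) * ennreal (cf_denom w 0 powr (- 2 * s))
          \<partial>count_space (words n))"
    unfolding partition_fun_def using SUP_birkhoff_cf[OF _ assms]
    by (intro nn_integral_cong) (simp add: ennreal_mult)
  also have "\<dots> = ennreal (exp (- c * real n)) * denom_sum n s"
    unfolding denom_sum_def by (rule nn_integral_cmult) simp
  finally show ?thesis .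
qed

lemma bij_betw_append_words:
  "bij_betw (\<lambda>(u, v). u @ v) (words n \<times> words m) (words (n + m))"
proof (rule bij_betwI')
  fix x y assume "x \<in> words n \<times> words m" "y \<in> words n \<times> words m"
  then show "((case x of (u, v) \<Rightarrow> u @ v) = (case y of (u, v) \<Rightarrow> u @ v)) = (x = y)"
    by (cases x, cases y) (auto simp: words_def)
next
  fix w assume "w \<in> words (n + m)"
  then show "\<exists>x\<in>words n \<times> words m. w = (case x of (u, v) \<Rightarrow> u @ v)"
    by (intro bexI[of _ "(take n w, drop n w)"])
      (auto simp: words_def dest: in_set_takeD in_set_dropD)
qed (auto simp: words_def)

lemma nn_integral_words_add:
  "(\<integral>\<^sup>+w. h w \<partial>count_space (words (n + m)))
     = (\<integral>\<^sup>+u. \<integral>\<^sup>+v. h (u @ v) \<partial>count_space (words m) \<partial>count_space (words n))"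
proof -
  interpret M: sigma_finite_measure "count_space (words m)"
    by (rule sigma_finite_measure_count_space_countable) simp
  have "(\<integral>\<^sup>+w. h w \<partial>count_space (words (n + m)))
      = (\<integral>\<^sup>+z. h (case z of (u, v) \<Rightarrow> u @ v) \<partial>count_space (words n \<times> words m))"
    by (rule nn_integral_bij_count_space[OF bij_betw_append_words, symmetric])
  also have "\<dots> = (\<integral>\<^sup>+z. h (case z of (u, v) \<Rightarrow> u @ v)
                     \<partial>(count_space (words n) \<Otimes>\<^sub>M count_space (words m)))"
    by (simp add: pair_measure_countable)
  also have "\<dots> = (\<integral>\<^sup>+u. \<integral>\<^sup>+v. h (u @ v) \<partial>count_space (words m) \<partial>count_space (words n))"
    by (subst M.nn_integral_fst[symmetric]) (simp_all add: pair_measure_countable)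
  finally show ?thesis .
qed

lemma denom_sum_add_le:
  assumes "0 \<le> s"
  shows "denom_sum (n + m) s \<le> denom_sum n s * denom_sum m s"
proof -
  have "ennreal (cf_denom (u @ v) 0 powr (- 2 * s))
      \<le> ennreal (cf_denom u 0 powr (- 2 * s)) * ennreal (cf_denom v 0 powr (- 2 * s))"
    if "admissible u" "admissible v" for u v
  proof -
    have u: "1 \<le> cf_denom u 0" and v: "1 \<le> cf_denom v 0"
      using that cf_denom_ge_1[of 0] by auto
    have "cf_denom (u @ v) 0 powr (- 2 * s) \<le> (cf_denom u 0 * cf_denom v 0) powr (- 2 * s)"
      using that assms u v cf_denom_append_bounds(1) by (intro powr_mono2') auto
    then show ?thesis
      using u v by (simp add: powr_mult ennreal_leI flip: ennreal_mult)
  qed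
  then have "denom_sum (n + m) s \<le> (\<integral>\<^sup>+u. \<integral>\<^sup>+v. ennreal (cf_denom u 0 powr (- 2 * s))
      * ennreal (cf_denom v 0 powr (- 2 * s)) \<partial>count_space (words m) \<partial>count_space (words n))"
    unfolding denom_sum_def nn_integral_words_add
    by (intro nn_integral_mono) (simp add: mem_words_iff)
  also have "\<dots> = denom_sum n s * denom_sum m s"
    unfolding denom_sum_def by (simp add: nn_integral_cmult nn_integral_multc)
  finally show ?thesis .
qed

lemma denom_sum_add_ge:
  assumes "0 \<le> s"
  shows "ennreal (2 powr (- 2 * s)) * (denom_sum n s * denom_sum m s) \<le> denom_sum (n + m) s"
proof -
  have "ennreal (2 powr (- 2 * s)) * ennreal (cf_denom u 0 powr (- 2 * s))
          * ennreal (cf_denom v 0 powr (- 2 * s))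
      \<le> ennreal (cf_denom (u @ v) 0 powr (- 2 * s))"
    if "admissible u" "admissible v" for u v
  proof -
    have u: "1 \<le> cf_denom u 0" and v: "1 \<le> cf_denom v 0"
      using that cf_denom_ge_1[of 0] by auto
    have "(2 * (cf_denom u 0 * cf_denom v 0)) powr (- 2 * s) \<le> cf_denom (u @ v) 0 powr (- 2 * s)"
      using that assms u v cf_denom_append_bounds(2) cf_denom_ge_1[of 0 "u @ v"]
      by (intro powr_mono2') auto
    then show ?thesis
      using u v by (simp add: powr_mult ennreal_leI mult.assoc flip: ennreal_mult)
  qed
  then have "(\<integral>\<^sup>+u. \<integral>\<^sup>+v. ennreal (2 powr (- 2 * s)) * ennreal (cf_denom u 0 powr (- 2 * s))
        * ennreal (cf_denom v 0 powr (- 2 * s)) \<partial>count_space (words m) \<partial>count_space (words n))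
      \<le> denom_sum (n + m) s"
    unfolding denom_sum_def nn_integral_words_add
    by (intro nn_integral_mono) (simp add: mem_words_iff)
  then show ?thesis
    unfolding denom_sum_def by (simp add: nn_integral_cmult nn_integral_multc mult.assoc)
qed

lemma denom_sum_0 [simp]: "denom_sum 0 s = 1"
proof -
  have "words 0 = {[]}" by (auto simp: words_def)
  then show ?thesis unfolding denom_sum_def by (simp add: nn_integral_count_space_finite)
qed

lemma denom_sum_1: "denom_sum 1 s = (\<Sum>k. ennreal (real (Suc k) powr (- 2 * s)))"
proof -
  have "bij_betw (\<lambda>k. [Suc k]) UNIV (words 1)"
  proof (rule bij_betwI')
    fix w assume "w \<in> words 1"
    then obtain a where "w = [a]" "1 \<le> a" by (auto simp: words_def length_Suc_conv)
    then show "\<exists>k\<in>UNIV. w = [Suc k]" by (intro bexI[of _ "a - 1"]) auto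
  qed (auto simp: words_def)
  then have "denom_sum 1 s = (\<integral>\<^sup>+k. ennreal (cf_denom [Suc k] 0 powr (- 2 * s)) \<partial>count_space UNIV)"
    unfolding denom_sum_def by (rule nn_integral_bij_count_space[symmetric])
  then show ?thesis by (simp add: nn_integral_count_space_nat cf_denom_Cons)
qed

lemma denom_sum_1_ge_1: "1 \<le> denom_sum 1 s"
  unfolding denom_sum_1
  using ennreal_suminf_lessD[of "\<lambda>k. ennreal (real (Suc k) powr (- 2 * s))" _ 0]
  by (force simp: not_less)

lemma denom_sum_pos: "0 \<le> s \<Longrightarrow> 0 < denom_sum n s"
proof (induction n)
  case (Suc n)
  have "0 < ennreal (2 powr (- 2 * s)) * (denom_sum n s * denom_sum 1 s)"
    using Suc less_le_trans[OF zero_less_one denom_sum_1_ge_1]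
    by (simp add: ennreal_zero_less_mult_iff)
  also have "\<dots> \<le> denom_sum (Suc n) s"
    using denom_sum_add_ge[OF Suc.prems, of n 1] by simp
  finally show ?case .
qed simp

lemma summable_Suc_powr_iff: "summable (\<lambda>k. real (Suc k) powr (- 2 * s)) \<longleftrightarrow> 1/2 < s"
  using summable_Suc_iff[of "\<lambda>k. real k powr (- 2 * s)"] summable_real_powr_iff[of "- 2 * s"]
  by auto

lemma denom_sum_1_eq_top: "s \<le> 1/2 \<Longrightarrow> denom_sum 1 s = top"
proof (rule ccontr)
  assume "s \<le> 1/2" "denom_sum 1 s \<noteq> top"
  then have "summable (\<lambda>k. real (Suc k) powr (- 2 * s))"
    unfolding denom_sum_1 by (intro summable_suminf_not_top) auto
  with \<open>s \<le> 1/2\<close> show False using summable_Suc_powr_iff by auto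
qed

lemma denom_sum_eq_top:
  assumes "0 \<le> s" "s \<le> 1/2" "1 \<le> n"
  shows "denom_sum n s = top"
proof -
  obtain m where n: "n = m + 1" using assms(3) by (metis add.commute le_add_diff_inverse)
  have "ennreal (2 powr (- 2 * s)) * (denom_sum m s * denom_sum 1 s) = top"
    using denom_sum_pos[OF assms(1), of m] denom_sum_1_eq_top[OF assms(2)]
    by (simp add: ennreal_mult_eq_top_iff)
  with denom_sum_add_ge[OF assms(1), of m 1] show ?thesis
    unfolding n by (simp add: top_unique)
qed

lemma denom_sum_less_top: "1/2 < s \<Longrightarrow> denom_sum n s < top"
proof (induction n)
  case (Suc n)
  have "summable (\<lambda>k. real (Suc k) powr (- 2 * s))"
    using Suc.prems summable_Suc_powr_iff by blast
  then have "denom_sum 1 s \<noteq> top"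
    unfolding denom_sum_1 by (rule ennreal_suminf_neq_top) simp
  then have "denom_sum 1 s < top" by (simp add: less_top)
  with Suc have "denom_sum n s * denom_sum 1 s < top" by (simp add: ennreal_mult_less_top)
  moreover have "denom_sum (n + 1) s \<le> denom_sum n s * denom_sum 1 s"
    using Suc.prems by (intro denom_sum_add_le) simp
  ultimately show ?case by simp
qed simp

lemma denom_sum_antimono: "s \<le> u \<Longrightarrow> denom_sum n u \<le> denom_sum n s"
  unfolding denom_sum_def using cf_denom_ge_1[of 0]
  by (intro nn_integral_mono ennreal_leI powr_mono) (auto simp: mem_words_iff)

section \<open>Almost additive sequences\<close>

locale almost_additive =
  fixes b :: "nat \<Rightarrow> real" and K :: real
  assumes subadditive: "b (n + m) \<le> b n + b m"
    and superadditive: "b n + b m - K \<le> b (n + m)"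
begin

lemma multiple_bounds:
  assumes "0 < k"
  shows "b (k * n) \<le> real k * b n" "real k * (b n - K) \<le> b (k * n)"
proof -
  obtain j where k: "k = Suc j" using assms gr0_implies_Suc by blast
  have "b (Suc j * n) \<le> real (Suc j) * b n \<and> real (Suc j) * (b n - K) \<le> b (Suc j * n)"
  proof (induction j)
    case 0
    then show ?case using subadditive[of n 0] superadditive[of n 0] by (simp add: algebra_simps)
  next
    case (Suc j)
    then show ?case
      using subadditive[of n "Suc j * n"] superadditive[of n "Suc j * n"]
      by (simp add: algebra_simps)
  qed
  with k show "b (k * n) \<le> real k * b n" "real k * (b n - K) \<le> b (k * n)"
    by simp_all
qed

lemma quotient_multiple_close:
  assumes "0 < k" "0 < n"
  shows "\<bar>b (k * n) / real (k * n) - b n / real n\<bar> \<le> K / real n"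
proof -
  have kn: "0 < real k" "0 < real n" using assms by auto
  have "b (k * n) / real (k * n) \<le> real k * b n / real (k * n)"
    using multiple_bounds(1)[OF assms(1)] kn by (intro divide_right_mono) auto
  also have "\<dots> = b n / real n" using kn by simp
  finally have "b (k * n) / real (k * n) \<le> b n / real n" .
  moreover have "real k * (b n - K) / real (k * n) \<le> b (k * n) / real (k * n)"
    using multiple_bounds(2)[OF assms(1)] kn by (intro divide_right_mono) auto
  moreover have "real k * (b n - K) / real (k * n) = b n / real n - K / real n"
    using kn by (simp add: field_simps)
  ultimately show ?thesis by (simp add: abs_le_iff)
qed

lemma K_nonneg: "0 \<le> K"
  using subadditive[of 0 0] superadditive[of 0 0] by simp

lemma convergent_quotient: "convergent (\<lambda>n. b n / real n)"
proof (rule Cauchy_convergent, rule CauchyI)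
  fix e :: real assume "0 < e"
  obtain M0 :: nat where "2 * K / e < real M0"
    using reals_Archimedean2 by blast
  define M where "M = Suc M0"
  with \<open>2 * K / e < real M0\<close> have M: "0 < M" "2 * K / e < real M" by auto
  have "\<bar>b m / real m - b n / real n\<bar> < e" if "M \<le> m" "M \<le> n" for m n
  proof -
    have "\<bar>b (m * n) / real (m * n) - b m / real m\<bar> \<le> K / real m"
      using quotient_multiple_close[of n m] that M by (simp add: mult.commute)
    moreover have "\<bar>b (m * n) / real (m * n) - b n / real n\<bar> \<le> K / real n"
      using quotient_multiple_close[of m n] that M by simp
    moreover have "K / real m \<le> K / real M" "K / real n \<le> K / real M"
      using that M K_nonneg by (auto intro!: divide_left_mono)
    moreover have "2 * (K / real M) < e"
      using M \<open>0 < e\<close> by (simp add: field_simps)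
    ultimately show ?thesis by linarith
  qed
  then show "\<exists>M. \<forall>m\<ge>M. \<forall>n\<ge>M. norm (b m / real m - b n / real n) < e"
    by auto
qed

lemma lim_quotient_bounds:
  "b 1 - K \<le> lim (\<lambda>n. b n / real n)" "lim (\<lambda>n. b n / real n) \<le> b 1"
proof -
  have lim: "(\<lambda>n. b n / real n) \<longlonglongrightarrow> lim (\<lambda>n. b n / real n)"
    using convergent_quotient by (simp add: convergent_LIMSEQ_iff)
  have bnd: "b 1 - K \<le> b n / real n \<and> b n / real n \<le> b 1" if "0 < n" for n
    using multiple_bounds[OF that, of 1] that by (simp add: field_simps)
  show "b 1 - K \<le> lim (\<lambda>n. b n / real n)"
    using bnd by (intro LIMSEQ_le_const[OF lim] exI[of _ 1]) auto
  show "lim (\<lambda>n. b n / real n) \<le> b 1"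
    using bnd by (intro LIMSEQ_le_const2[OF lim] exI[of _ 1]) auto
qed

end

section \<open>The pressure of the geometric potential\<close>

lemma denom_sum_finite:
  assumes "1/2 < s"
  shows "denom_sum n s = ennreal (enn2real (denom_sum n s))" "0 < enn2real (denom_sum n s)"
  using denom_sum_less_top[OF assms, of n] denom_sum_pos[of s n] assms
  by (cases "denom_sum n s"; simp add: enn2real_positive_iff)+

definition log_denom_sum :: "nat \<Rightarrow> real \<Rightarrow> real" where
  "log_denom_sum n s = ln (enn2real (denom_sum n s))"

lemma almost_additive_log_denom_sum:
  assumes s: "1/2 < s"
  shows "almost_additive (\<lambda>n. log_denom_sum n s) (2 * s * ln 2)"
proof
  fix n m
  have pos: "0 < enn2real (denom_sum n s)" "0 < enn2real (denom_sum m s)"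
    using denom_sum_finite(2)[OF s] by auto
  have "enn2real (denom_sum (n + m) s) \<le> enn2real (denom_sum n s) * enn2real (denom_sum m s)"
    using denom_sum_add_le[of s n m] s denom_sum_less_top[OF s]
    by (subst enn2real_mult[symmetric]) (auto intro!: enn2real_mono simp: ennreal_mult_less_top)
  then have "ln (enn2real (denom_sum (n + m) s))
      \<le> ln (enn2real (denom_sum n s) * enn2real (denom_sum m s))"
    using pos denom_sum_finite(2)[OF s, of "n + m"] by (subst ln_le_cancel_iff) auto
  then show "log_denom_sum (n + m) s \<le> log_denom_sum n s + log_denom_sum m s"
    unfolding log_denom_sum_def using pos by (simp add: ln_mult)
  have "enn2real (ennreal (2 powr (- 2 * s)) * (denom_sum n s * denom_sum m s))
      \<le> enn2real (denom_sum (n + m) s)"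
    using denom_sum_add_ge[of s n m] s denom_sum_less_top[OF s] by (intro enn2real_mono) auto
  then have "2 powr (- 2 * s) * (enn2real (denom_sum n s) * enn2real (denom_sum m s))
      \<le> enn2real (denom_sum (n + m) s)"
    by (simp add: enn2real_mult)
  then have "ln (2 powr (- 2 * s) * (enn2real (denom_sum n s) * enn2real (denom_sum m s)))
      \<le> ln (enn2real (denom_sum (n + m) s))"
    using pos denom_sum_finite(2)[OF s, of "n + m"] by (subst ln_le_cancel_iff) auto
  then show "log_denom_sum n s + log_denom_sum m s - 2 * s * ln 2 \<le> log_denom_sum (n + m) s"
    unfolding log_denom_sum_def using pos by (simp add: ln_mult)
qed

definition geom_pressure :: "real \<Rightarrow> real" where
  "geom_pressure s = lim (\<lambda>n. log_denom_sum n s / real n)"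

lemma geom_pressure_LIMSEQ:
  "1/2 < s \<Longrightarrow> (\<lambda>n. log_denom_sum n s / real n) \<longlonglongrightarrow> geom_pressure s"
  using almost_additive.convergent_quotient[OF almost_additive_log_denom_sum]
  by (simp add: geom_pressure_def convergent_LIMSEQ_iff)

lemma geom_pressure_bounds:
  assumes "1/2 < s"
  shows "log_denom_sum 1 s - 2 * s * ln 2 \<le> geom_pressure s" "geom_pressure s \<le> log_denom_sum 1 s"
  using almost_additive.lim_quotient_bounds[OF almost_additive_log_denom_sum[OF assms]]
  by (simp_all add: geom_pressure_def)

lemma geom_pressure_le_at_1:
  assumes "1 \<le> s"
  shows "geom_pressure s \<le> log_denom_sum 1 1"
proof -
  have "enn2real (denom_sum 1 s) \<le> enn2real (denom_sum 1 1)"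
    using denom_sum_antimono[OF assms, of 1] denom_sum_less_top[of 1 1] by (intro enn2real_mono) auto
  then have "log_denom_sum 1 s \<le> log_denom_sum 1 1"
    unfolding log_denom_sum_def using denom_sum_finite(2)[of s 1] assms by simp
  then show ?thesis using geom_pressure_bounds(2)[of s] assms by simp
qed

lemma pressure_geom_potential:
  assumes s: "1/2 < s"
  shows "pressure (\<lambda>z. - s * ln \<bar>gauss_deriv z\<bar> - c) = ereal (geom_pressure s - c)"
proof -
  have "ln_enn (partition_fun (\<lambda>z. - s * ln \<bar>gauss_deriv z\<bar> - c) n) / ereal (real n)
      = ereal (log_denom_sum n s / real n - c)" if "0 < n" for n
  proof -
    have "partition_fun (\<lambda>z. - s * ln \<bar>gauss_deriv z\<bar> - c) n
        = ennreal (exp (- c * real n) * enn2real (denom_sum n s))"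
      using partition_fun_eq_denom_sum[of s c n] s denom_sum_finite[OF s, of n]
      by (simp add: ennreal_mult)
    then show ?thesis
      using that denom_sum_finite(2)[OF s, of n]
      by (simp add: ln_enn_def log_denom_sum_def ln_mult field_simps)
  qed
  then have "\<forall>\<^sub>F n in sequentially. ereal (log_denom_sum n s / real n - c)
      = ln_enn (partition_fun (\<lambda>z. - s * ln \<bar>gauss_deriv z\<bar> - c) n) / ereal (real n)"
    by (auto simp: eventually_sequentially intro: exI[of _ 1])
  moreover have "(\<lambda>n. ereal (log_denom_sum n s / real n - c)) \<longlonglongrightarrow> ereal (geom_pressure s - c)"
    using geom_pressure_LIMSEQ[OF s] by (intro tendsto_intros lim_ereal[THEN iffD2])
  ultimately show ?thesis
    unfolding pressure_def by (intro limI) (rule Lim_transform_eventually)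
qed

lemma pressure_geom_potential_infinite:
  assumes "0 \<le> s" "s \<le> 1/2"
  shows "pressure (\<lambda>z. - s * ln \<bar>gauss_deriv z\<bar> - c) = PInfty"
proof -
  have "ln_enn (partition_fun (\<lambda>z. - s * ln \<bar>gauss_deriv z\<bar> - c) n) / ereal (real n) = PInfty"
    if "0 < n" for n
    using that partition_fun_eq_denom_sum[OF assms(1), of c n] denom_sum_eq_top[OF assms, of n]
    by (simp add: ln_enn_def)
  then have "\<forall>\<^sub>F n in sequentially. PInfty
      = ln_enn (partition_fun (\<lambda>z. - s * ln \<bar>gauss_deriv z\<bar> - c) n) / ereal (real n)"
    by (auto simp: eventually_sequentially intro: exI[of _ 1])
  then show ?thesis
    unfolding pressure_def by (intro limI) (rule Lim_transform_eventually[OF tendsto_const])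
qed

lemma pressure_geom_potential_nonpos_iff:
  assumes "0 \<le> s"
  shows "pressure (\<lambda>z. - s * ln \<bar>gauss_deriv z\<bar> - c) \<le> 0 \<longleftrightarrow> 1/2 < s \<and> geom_pressure s \<le> c"
proof (cases "1/2 < s")
  case True
  then show ?thesis using pressure_geom_potential[OF True, of c] by simp
next
  case False
  then show ?thesis using pressure_geom_potential_infinite[OF assms, of c] by simp
qed

lemma convex_combination_gt_half:
  fixes s u a :: real
  assumes "1/2 < s" "1/2 < u" "0 \<le> a" "a \<le> 1"
  shows "1/2 < a * s + (1 - a) * u"
  using convexD[OF convex_real_interval(3), of s "1/2" u a "1 - a"] assms by simp

lemma denom_sum_holder:
  assumes s: "1/2 < s" and u: "1/2 < u" and a: "0 \<le> a" "a \<le> 1"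
  shows "enn2real (denom_sum n (a * s + (1 - a) * u))
    \<le> enn2real (denom_sum n s) powr a * enn2real (denom_sum n u) powr (1 - a)"
proof -
  define A where "A = enn2real (denom_sum n s)"
  define C where "C = enn2real (denom_sum n u)"
  define K where "K = A powr a * C powr (1 - a)"
  have A: "0 < A" "denom_sum n s = ennreal A" using denom_sum_finite[OF s, of n] by (auto simp: A_def)
  have C: "0 < C" "denom_sum n u = ennreal C" using denom_sum_finite[OF u, of n] by (auto simp: C_def)
  have K0: "0 \<le> K" by (simp add: K_def)
  \<comment> \<open>Young's inequality, applied termwise with the weights normalised by A and C\<close>
  have pointwise: "ennreal (q powr (- 2 * (a * s + (1 - a) * u)))
      \<le> ennreal (K * a / A) * ennreal (q powr (- 2 * s)) + ennreal (K * (1 - a) / C) * ennreal (q powr (- 2 * u))"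
    if "0 < q" for q
  proof -
    have "(q powr (- 2 * s) / A) powr a * (q powr (- 2 * u) / C) powr (1 - a)
        \<le> a * (q powr (- 2 * s) / A) + (1 - a) * (q powr (- 2 * u) / C)"
      using Youngs_inequality_0[of a "1 - a" "q powr (- 2 * s) / A" "q powr (- 2 * u) / C"] A C a that
      by simp
    then have "q powr (- 2 * (a * s + (1 - a) * u))
        \<le> K * a / A * q powr (- 2 * s) + K * (1 - a) / C * q powr (- 2 * u)"
      using A C that unfolding K_def
      by (simp add: powr_divide powr_powr powr_add[symmetric] field_simps)
    then have "ennreal (q powr (- 2 * (a * s + (1 - a) * u)))
        \<le> ennreal (K * a / A * q powr (- 2 * s) + K * (1 - a) / C * q powr (- 2 * u))"
      by (rule ennreal_leI)
    also have "\<dots> = ennreal (K * a / A) * ennreal (q powr (- 2 * s))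
        + ennreal (K * (1 - a) / C) * ennreal (q powr (- 2 * u))"
      using A C a K0 by (simp flip: ennreal_mult ennreal_plus)
    finally show ?thesis .
  qed
  have "denom_sum n (a * s + (1 - a) * u)
      \<le> (\<integral>\<^sup>+ w. ennreal (K * a / A) * ennreal (cf_denom w 0 powr (- 2 * s))
           + ennreal (K * (1 - a) / C) * ennreal (cf_denom w 0 powr (- 2 * u)) \<partial>count_space (words n))"
    unfolding denom_sum_def using pointwise cf_denom_ge_1[of 0]
    by (intro nn_integral_mono) (force simp: mem_words_iff)
  also have "\<dots> = ennreal (K * a / A) * ennreal A + ennreal (K * (1 - a) / C) * ennreal C"
    using A C unfolding denom_sum_def by (simp add: nn_integral_add nn_integral_cmult)
  also have "\<dots> = ennreal (K * a / A * A + K * (1 - a) / C * C)"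
    using A C a K0 by (simp flip: ennreal_mult ennreal_plus)
  also have "K * a / A * A + K * (1 - a) / C * C = K"
    using A C by (simp add: field_simps)
  finally show ?thesis
    unfolding K_def A_def C_def by (simp add: enn2real_leI)
qed

lemma log_denom_sum_convex: "convex_on {1/2<..} (log_denom_sum n)"
proof (rule convex_onI)
  fix t x y :: real
  assume t: "0 < t" "t < 1" and xy: "x \<in> {1/2<..}" "y \<in> {1/2<..}"
  have pos: "0 < enn2real (denom_sum n x)" "0 < enn2real (denom_sum n y)"
    "0 < enn2real (denom_sum n ((1 - t) * x + t * y))"
    using xy t convex_combination_gt_half[of x y "1 - t"] denom_sum_finite(2) by auto
  have "log_denom_sum n ((1 - t) * x + t * y)
      \<le> ln (enn2real (denom_sum n x) powr (1 - t) * enn2real (denom_sum n y) powr t)"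
    unfolding log_denom_sum_def using pos xy t denom_sum_holder[of x y "1 - t" n]
    by (subst ln_le_cancel_iff) auto
  then show "log_denom_sum n ((1 - t) *\<^sub>R x + t *\<^sub>R y)
      \<le> (1 - t) * log_denom_sum n x + t * log_denom_sum n y"
    using pos by (simp add: log_denom_sum_def ln_mult)
qed simp

lemma geom_pressure_convex: "convex_on {1/2<..} geom_pressure"
proof (rule convex_onI)
  fix t x y :: real
  assume t: "0 < t" "t < 1" and xy: "x \<in> {1/2<..}" "y \<in> {1/2<..}"
  have z: "1/2 < (1 - t) * x + t * y"
    using xy t convex_combination_gt_half[of x y "1 - t"] by auto
  have "(\<lambda>n. (1 - t) * (log_denom_sum n x / real n) + t * (log_denom_sum n y / real n))
      \<longlonglongrightarrow> (1 - t) * geom_pressure x + t * geom_pressure y"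
    using xy by (intro tendsto_intros geom_pressure_LIMSEQ) auto
  moreover have "log_denom_sum n ((1 - t) * x + t * y) / real n
      \<le> (1 - t) * (log_denom_sum n x / real n) + t * (log_denom_sum n y / real n)" for n
    using divide_right_mono[OF convex_onD[OF log_denom_sum_convex[of n], of t x y], of "real n"] t xy
    by (simp add: add_divide_distrib)
  ultimately have "geom_pressure ((1 - t) * x + t * y) \<le> (1 - t) * geom_pressure x + t * geom_pressure y"
    by (intro LIMSEQ_le[OF geom_pressure_LIMSEQ[OF z]]) auto
  then show "geom_pressure ((1 - t) *\<^sub>R x + t *\<^sub>R y) \<le> (1 - t) * geom_pressure x + t * geom_pressure y"
    by simp
qed simp

lemma continuous_on_geom_pressure: "continuous_on {1/2<..} geom_pressure"
  by (intro convex_on_continuous geom_pressure_convex) simp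

lemma partial_zeta_le_denom_sum_1:
  assumes "1/2 < s"
  shows "(\<Sum>k<N. real (Suc k) powr (- 2 * s)) \<le> enn2real (denom_sum 1 s)"
proof -
  have "(\<Sum>k<N. ennreal (real (Suc k) powr (- 2 * s))) \<le> denom_sum 1 s"
    unfolding denom_sum_1 by (rule sum_le_suminf) auto
  then show ?thesis
    using denom_sum_finite(1)[OF assms, of 1] by (simp add: ennreal_le_iff[symmetric])
qed

lemma geom_pressure_at_right_half: "filterlim geom_pressure at_top (at_right (1/2))"
  unfolding filterlim_at_top
proof
  fix Z :: real
  define M where "M = Z + 2 * ln 2"
  define N where "N = nat \<lceil>exp (exp M)\<rceil>"
  define h where "h s = (\<Sum>k<N. real (Suc k) powr (- 2 * s))" for s
  have N: "exp (exp M) \<le> real N" unfolding N_def by linarith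
  have N0: "0 < real N" using order_less_le_trans[OF exp_gt_zero N] .
  have "exp M \<le> ln (real N)"
    using N N0 by (subst ln_ge_iff) auto
  also have "\<dots> < ln (real N + 1)"
    using N0 by simp
  also have "\<dots> \<le> h (1/2)"
    unfolding h_def using ln_le_harm[of N] by (simp add: harm_altdef powr_minus)
  finally have "exp M < h (1/2)" .
  moreover have "(h \<longlongrightarrow> h (1/2)) (at_right (1/2))"
    unfolding h_def by (intro tendsto_intros) auto
  ultimately have "\<forall>\<^sub>F s in at_right (1/2). exp M < h s"
    by (simp add: order_tendstoD(1))
  moreover have "\<forall>\<^sub>F s in at_right (1/2). 1/2 < s \<and> s < (1::real)"
    by (auto simp: eventually_at_right_field intro!: exI[of _ 1])
  ultimately show "\<forall>\<^sub>F s in at_right (1/2). Z \<le> geom_pressure s"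
  proof eventually_elim
    case (elim s)
    then have h: "0 < h s" using exp_gt_zero order.strict_trans by blast
    have "M = ln (exp M)" by simp
    also have "\<dots> < ln (h s)" using elim h by (subst ln_less_cancel_iff) auto
    also have "\<dots> \<le> log_denom_sum 1 s"
      unfolding log_denom_sum_def using elim h partial_zeta_le_denom_sum_1[of s N, folded h_def]
      by (subst ln_le_cancel_iff) auto
    also have "\<dots> \<le> geom_pressure s + 2 * s * ln 2"
      using geom_pressure_bounds(1)[of s] elim by simp
    also have "\<dots> \<le> geom_pressure s + 2 * ln 2"
      using elim by simp
    finally show ?case unfolding M_def by simp
  qed
qed

section \<open>Closed forms of g and f\<close>

lemma sum_powers_step:
  fixes r :: real
  shows "(\<Sum>j<Suc n. c j * r ^ j) = c 0 + r * (\<Sum>j<n. c (Suc j) * r ^ j)"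
  unfolding sum.lessThan_Suc_shift by (simp add: sum_distrib_left algebra_simps)

lemma sum_antitone_powers_bounds:
  fixes r :: real and c :: "nat \<Rightarrow> real"
  assumes "-1 \<le> r" and "\<And>j. j < n \<Longrightarrow> 0 \<le> c j" and "\<And>j. Suc j < n \<Longrightarrow> c (Suc j) \<le> c j"
  shows "0 \<le> (\<Sum>j<n. c j * r ^ j) \<and> (r \<le> 0 \<and> 0 < n \<longrightarrow> (\<Sum>j<n. c j * r ^ j) \<le> c 0)"
  using assms(2,3)
proof (induction n arbitrary: c)
  case (Suc n)
  define T where "T = (\<Sum>j<n. c (Suc j) * r ^ j)"
  have T: "0 \<le> T" "r \<le> 0 \<and> 0 < n \<longrightarrow> T \<le> c 1"
    using Suc.IH[of "\<lambda>j. c (Suc j)"] Suc.prems unfolding T_def by auto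
  have c0: "0 \<le> c 0" using Suc.prems by auto
  have S: "(\<Sum>j<Suc n. c j * r ^ j) = c 0 + r * T"
    unfolding T_def by (rule sum_powers_step)
  show ?case
  proof (cases "0 \<le> r")
    case True
    then show ?thesis unfolding S using T c0 by auto
  next
    case False
    have "T \<le> c 0"
    proof (cases n)
      case (Suc m)
      then show ?thesis using T False Suc.prems(2)[of 0] by auto
    qed (simp add: T_def c0)
    then have "r * c 0 \<le> r * T" using False by (intro mult_left_mono_neg) auto
    moreover have "0 \<le> (1 + r) * c 0" using assms(1) c0 by simp
    moreover have "r * T \<le> 0" using False T by (simp add: mult_nonpos_nonneg)
    ultimately show ?thesis unfolding S by (simp add: algebra_simps)
  qed
qed simp

lemma sum_antitone_powers_lower:
  fixes r :: real and c :: "nat \<Rightarrow> real"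
  assumes "-1 \<le> r" and "\<And>j. j < n \<Longrightarrow> 0 \<le> c j" and "\<And>j. Suc j < n \<Longrightarrow> c (Suc j) \<le> c j"
    and "0 < n"
  shows "c 0 * min 1 (1 + r) \<le> (\<Sum>j<n. c j * r ^ j)"
proof -
  obtain m where n: "n = Suc m" using assms(4) gr0_implies_Suc by blast
  define T where "T = (\<Sum>j<m. c (Suc j) * r ^ j)"
  have T: "0 \<le> T" "r \<le> 0 \<and> 0 < m \<longrightarrow> T \<le> c 1"
    using sum_antitone_powers_bounds[OF assms(1), of m "\<lambda>j. c (Suc j)"] assms(2,3) n
    unfolding T_def by auto
  have c0: "0 \<le> c 0" using assms(2) n by auto
  have S: "(\<Sum>j<n. c j * r ^ j) = c 0 + r * T"
    unfolding n T_def by (rule sum_powers_step)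
  show ?thesis
  proof (cases "0 \<le> r")
    case True
    then show ?thesis unfolding S using T c0 by (simp add: min_def)
  next
    case False
    have "T \<le> c 0"
    proof (cases m)
      case (Suc k)
      then show ?thesis using T False assms(3)[of 0] n by auto
    qed (simp add: T_def c0)
    then have "r * c 0 \<le> r * T" using False by (intro mult_left_mono_neg) auto
    then show ?thesis unfolding S using False by (simp add: min_def algebra_simps)
  qed
qed

(* In terms of s/g_d and s/f_d the recursions become linear:
   s/g_d = d + r s/g_(d-1) and s/f_d = 1 + r s/f_(d-1), where r = (1 - s)/s. *)
definition gf_ratio :: "real \<Rightarrow> real" where
  "gf_ratio s = (1 - s) / s"

definition g_denom :: "nat \<Rightarrow> real \<Rightarrow> real" where
  "g_denom d s = (\<Sum>j<d. real (d - j) * gf_ratio s ^ j)"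

definition f_denom :: "nat \<Rightarrow> real \<Rightarrow> real" where
  "f_denom d s = (\<Sum>j<d. gf_ratio s ^ j)"

lemma gf_ratio_gt: "0 < s \<Longrightarrow> -1 < gf_ratio s"
  unfolding gf_ratio_def by (simp add: field_simps)

lemma g_denom_lower: "0 < s \<Longrightarrow> 0 < d \<Longrightarrow> real d * min 1 (1 + gf_ratio s) \<le> g_denom d s"
  unfolding g_denom_def using gf_ratio_gt[of s]
  by (intro sum_antitone_powers_lower[where c = "\<lambda>j. real (d - j)", simplified]) auto

lemma g_denom_pos: "0 < s \<Longrightarrow> 0 < d \<Longrightarrow> 0 < g_denom d s"
  using less_le_trans[OF _ g_denom_lower[of s d]] gf_ratio_gt[of s] by simp

lemma f_denom_pos:
  assumes "0 < s" "0 < d"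
  shows "0 < f_denom d s"
proof -
  have "min 1 (1 + gf_ratio s) \<le> f_denom d s"
    unfolding f_denom_def using gf_ratio_gt[OF assms(1)] assms(2)
    by (intro sum_antitone_powers_lower[where c = "\<lambda>_. 1", simplified]) auto
  with gf_ratio_gt[OF assms(1)] show ?thesis by simp
qed

lemma g_denom_Suc: "g_denom (Suc d) s = real (Suc d) + gf_ratio s * g_denom d s"
  unfolding g_denom_def by (subst sum_powers_step) (simp add: Suc_diff_Suc)

lemma f_denom_Suc: "f_denom (Suc d) s = 1 + gf_ratio s * f_denom d s"
  unfolding f_denom_def using sum_powers_step[where c = "\<lambda>_. 1" and n = d and r = "gf_ratio s"] by simp

lemma g_eq_div_g_denom:
  assumes s: "0 < s" and "0 < d"
  shows "g d s = s / g_denom d s"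
proof -
  have "g (Suc k) s = s / g_denom (Suc k) s" for k
  proof (induction k)
    case (Suc k)
    have pos: "0 < g_denom (Suc k) s" "0 < g_denom (Suc (Suc k)) s"
      using g_denom_pos[OF s] by auto
    have "1 - s + real (Suc (Suc k)) * (s / g_denom (Suc k) s)
        = s * g_denom (Suc (Suc k)) s / g_denom (Suc k) s"
      using s pos unfolding g_denom_Suc[of "Suc k"] gf_ratio_def by (simp add: field_simps)
    then show ?case
      using s pos by (simp only: g.simps Suc) (simp add: field_simps)
  qed (simp add: g_denom_def)
  with assms show ?thesis by (metis gr0_implies_Suc)
qed

lemma f_eq_div_f_denom:
  assumes s: "0 < s" and "0 < d"
  shows "f d s = s / f_denom d s"
proof -
  have "f (Suc k) s = s / f_denom (Suc k) s" for k
  proof (induction k)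
    case (Suc k)
    have pos: "0 < f_denom (Suc k) s" "0 < f_denom (Suc (Suc k)) s"
      using f_denom_pos[OF s] by auto
    have "1 - s + s / f_denom (Suc k) s = s * f_denom (Suc (Suc k)) s / f_denom (Suc k) s"
      using s pos unfolding f_denom_Suc[of "Suc k"] gf_ratio_def by (simp add: field_simps)
    then show ?case
      using s pos by (simp only: f.simps Suc) (simp add: field_simps)
  qed (simp add: f_denom_def)
  with assms show ?thesis by (metis gr0_implies_Suc)
qed

lemma g_less_f:
  assumes s: "0 < s" and d: "2 \<le> d"
  shows "g d s < f d s"
proof -
  have "g_denom d s - f_denom d s = (\<Sum>j<d. real (d - Suc j) * gf_ratio s ^ j)"
    unfolding g_denom_def f_denom_def
    by (simp add: sum_subtractf[symmetric] algebra_simps Suc_diff_Suc)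
  also have "real (d - 1) * min 1 (1 + gf_ratio s) \<le> \<dots>"
    using sum_antitone_powers_lower[of "gf_ratio s" d "\<lambda>j. real (d - Suc j)"] gf_ratio_gt[OF s] d
    by simp
  finally have "real (d - 1) * min 1 (1 + gf_ratio s) \<le> g_denom d s - f_denom d s" .
  moreover have "0 < real (d - 1) * min 1 (1 + gf_ratio s)"
    using gf_ratio_gt[OF s] d by simp
  ultimately have "f_denom d s < g_denom d s" by linarith
  with s d show ?thesis
    by (simp add: g_eq_div_g_denom f_eq_div_f_denom f_denom_pos frac_less2)
qed

lemma g_le_f:
  assumes s: "0 < s" and d: "0 < d"
  shows "g d s \<le> (real d + 1) / 2 * f d s"
proof -
  have "(real d + 1) * g_denom d s - 2 * f_denom d s
      = (\<Sum>j<d. ((real d + 1) * real (d - j) - 2) * gf_ratio s ^ j)"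
    unfolding g_denom_def f_denom_def
    by (simp add: sum_distrib_left sum_subtractf[symmetric] algebra_simps)
  also have "0 \<le> \<dots>"
  proof -
    have "(real d + 1) * 1 - 2 \<le> (real d + 1) * real (d - j) - 2" if "j < d" for j
      using that by (intro diff_right_mono mult_left_mono) auto
    moreover have "(real d + 1) * real (d - Suc j) \<le> (real d + 1) * real (d - j)" for j
      by (intro mult_left_mono) auto
    ultimately show ?thesis
      using sum_antitone_powers_bounds[of "gf_ratio s" d "\<lambda>j. (real d + 1) * real (d - j) - 2"]
        gf_ratio_gt[OF s] d by force
  qed
  finally have "s * (2 * f_denom d s) \<le> s * ((real d + 1) * g_denom d s)"
    using s by (intro mult_left_mono) auto
  with s d g_denom_pos[OF s d] f_denom_pos[OF s d] show ?thesis
    by (simp add: g_eq_div_g_denom f_eq_div_f_denom field_simps)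
qed

lemma g_le_self:
  assumes "0 < s" "s \<le> 1" "0 < d"
  shows "g d s \<le> s"
proof -
  have "real d * min 1 (1 + gf_ratio s) \<le> g_denom d s"
    using g_denom_lower assms by blast
  moreover have "0 \<le> gf_ratio s" using assms unfolding gf_ratio_def by simp
  ultimately have "1 \<le> g_denom d s" using assms by simp
  with assms show ?thesis by (simp add: g_eq_div_g_denom divide_le_eq)
qed

lemma g_ge_div:
  assumes "1 \<le> s" "0 < d"
  shows "s / real d \<le> g d s"
proof -
  have "gf_ratio s \<le> 0" using assms unfolding gf_ratio_def by (simp add: divide_nonpos_pos)
  then have "g_denom d s \<le> real d"
    using sum_antitone_powers_bounds[of "gf_ratio s" d "\<lambda>j. real (d - j)"]
      gf_ratio_gt[of s] assms
    by (simp add: g_denom_def)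
  with assms g_denom_pos[of s d] show ?thesis
    by (simp add: g_eq_div_g_denom frac_le)
qed

lemma continuous_on_g:
  assumes "0 < d"
  shows "continuous_on {0<..} (g d)"
proof -
  have "continuous_on {0<..} (g_denom d)"
    unfolding g_denom_def gf_ratio_def by (intro continuous_intros) auto
  then have "continuous_on {0<..} (\<lambda>s. s / g_denom d s)"
    using g_denom_pos[OF _ assms] by (intro continuous_intros) force+
  then show ?thesis
    by (rule continuous_on_eq) (simp add: g_eq_div_g_denom assms)
qed

lemma continuous_on_f:
  assumes "0 < d"
  shows "continuous_on {0<..} (f d)"
proof -
  have "continuous_on {0<..} (f_denom d)"
    unfolding f_denom_def gf_ratio_def by (intro continuous_intros) auto
  then have "continuous_on {0<..} (\<lambda>s. s / f_denom d s)"
    using f_denom_pos[OF _ assms] by (intro continuous_intros) force+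
  then show ?thesis
    by (rule continuous_on_eq) (simp add: f_eq_div_f_denom assms)
qed

section \<open>Comparison of the two infima\<close>

lemma Inf_sublevel_less:
  fixes \<phi> \<alpha> \<beta> :: "real \<Rightarrow> real"
  assumes cont: "continuous_on {a<..} \<phi>" "continuous_on {a<..} \<alpha>" "continuous_on {a<..} \<beta>"
    and less: "\<And>s. a < s \<Longrightarrow> \<alpha> s < \<beta> s"
    and nonempty: "\<exists>s. a < s \<and> \<phi> s \<le> \<alpha> s"
    and away: "a < c" "\<And>s. a < s \<Longrightarrow> \<phi> s \<le> \<alpha> s \<Longrightarrow> c \<le> s"
  shows "Inf {s. a < s \<and> \<phi> s \<le> \<beta> s} < Inf {s. a < s \<and> \<phi> s \<le> \<alpha> s}"
proof -
  define S where "S = {s. a < s \<and> \<phi> s \<le> \<alpha> s}"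
  define l where "l = Inf S"
  have S: "S \<noteq> {}" "bdd_below S" "S \<subseteq> {c..}"
    using nonempty away unfolding S_def by (auto intro: bdd_belowI[of _ a])
  have "closure S \<subseteq> {c..}" using S(3) by (rule closure_minimal) simp
  then have closure: "closure S \<subseteq> {a<..}" using away(1) by auto
  have l: "l \<in> closure S" unfolding l_def using S(1,2) by (rule closure_contains_Inf)
  with closure have "a < l" by auto
  have "\<phi> l - \<alpha> l \<le> 0"
  proof (rule continuous_le_on_closure[where f = "\<lambda>s. \<phi> s - \<alpha> s", OF _ l])
    show "continuous_on (closure S) (\<lambda>s. \<phi> s - \<alpha> s)"
      using cont by (intro continuous_intros continuous_on_subset[OF _ closure])
  qed (simp add: S_def)
  with less[OF \<open>a < l\<close>] have "\<phi> l - \<beta> l < 0" by simp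
  moreover have "isCont (\<lambda>s. \<phi> s - \<beta> s) l"
    using cont \<open>a < l\<close> by (intro continuous_intros) (auto simp: continuous_on_eq_continuous_at)
  then have "((\<lambda>s. \<phi> s - \<beta> s) \<longlongrightarrow> \<phi> l - \<beta> l) (at_left l)"
    unfolding isCont_def by (rule tendsto_within_subset) simp
  ultimately have "\<forall>\<^sub>F t in at_left l. \<phi> t - \<beta> t < 0"
    by (rule order_tendstoD(2)[rotated])
  moreover have "\<forall>\<^sub>F t in at_left l. a < t \<and> t < l"
    using \<open>a < l\<close> by (auto simp: eventually_at_left_field intro!: exI[of _ a])
  ultimately obtain t where t: "\<phi> t - \<beta> t < 0" "a < t" "t < l"
    using eventually_happens'[OF trivial_limit_at_left_real] eventually_conj by blast
  then have "Inf {s. a < s \<and> \<phi> s \<le> \<beta> s} \<le> t"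
    by (intro cInf_lower bdd_belowI[of _ a]) auto
  with t show ?thesis unfolding l_def S_def by simp
qed

lemma lambda_d_eq: "lambda_d d B = Inf {s. 1/2 < s \<and> geom_pressure s \<le> g d s * ln B}"
proof -
  have "{s. 0 \<le> s \<and> pressure (\<lambda>x. - s * ln \<bar>gauss_deriv x\<bar> - g d s * ln B) \<le> 0}
      = {s. 1/2 < s \<and> geom_pressure s \<le> g d s * ln B}"
    using pressure_geom_potential_nonpos_iff by force
  then show ?thesis unfolding lambda_d_def by simp
qed

lemma theta_d_eq: "theta_d d B = Inf {s. 1/2 < s \<and> geom_pressure s \<le> f d s * ln B}"
proof -
  have "(\<lambda>x. - f d s * ln B - s * ln \<bar>gauss_deriv x\<bar>) = (\<lambda>x. - s * ln \<bar>gauss_deriv x\<bar> - f d s * ln B)"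
    for s by (rule ext) (simp add: algebra_simps)
  then have "{s. 0 \<le> s \<and> pressure (\<lambda>x. - f d s * ln B - s * ln \<bar>gauss_deriv x\<bar>) \<le> 0}
      = {s. 1/2 < s \<and> geom_pressure s \<le> f d s * ln B}"
    using pressure_geom_potential_nonpos_iff by force
  then show ?thesis unfolding theta_d_def by simp
qed

lemma lambda_set_nonempty:
  assumes B: "1 < B" and d: "0 < d"
  shows "\<exists>s. 1/2 < s \<and> geom_pressure s \<le> g d s * ln B"
proof -
  define C where "C = log_denom_sum 1 1"
  define s where "s = 1 + real d * \<bar>C\<bar> / ln B"
  have L: "0 < ln B" using B by simp
  have s1: "1 \<le> s" unfolding s_def using L by simp
  have "geom_pressure s \<le> \<bar>C\<bar>" using geom_pressure_le_at_1[OF s1] unfolding C_def by simp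
  also have "\<dots> \<le> s / real d * ln B"
    unfolding s_def using L d by (simp add: field_simps)
  also have "\<dots> \<le> g d s * ln B"
    using g_ge_div[OF s1 d] L by (intro mult_right_mono) auto
  finally show ?thesis using s1 by (intro exI[of _ s]) auto
qed

lemma lambda_set_bounded_away:
  assumes B: "1 < B" and d: "0 < d"
  obtains c where "1/2 < c" "\<And>s. 1/2 < s \<Longrightarrow> geom_pressure s \<le> g d s * ln B \<Longrightarrow> c \<le> s"
proof -
  have "\<forall>\<^sub>F s in at_right (1/2). ln B < geom_pressure s"
    using geom_pressure_at_right_half by (rule filterlim_at_top_dense[THEN iffD1, rule_format])
  then obtain b where b: "1/2 < b" "\<And>s. 1/2 < s \<Longrightarrow> s < b \<Longrightarrow> ln B < geom_pressure s"
    by (auto simp: eventually_at_right_field)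
  show ?thesis
  proof
    show "1/2 < min b 1" using b by simp
    fix s assume s: "1/2 < s" "geom_pressure s \<le> g d s * ln B"
    show "min b 1 \<le> s"
    proof (rule ccontr)
      assume "\<not> min b 1 \<le> s"
      then have "s < b" "s < 1" by auto
      then have "g d s * ln B \<le> 1 * ln B"
        using g_le_self[of s d] s d B by (intro mult_right_mono) auto
      with b(2)[OF s(1) \<open>s < b\<close>] s(2) show False by simp
    qed
  qed
qed

lemma lambda_d_gt_theta_d:
  assumes B: "1 < B" and d: "2 \<le> d"
  shows "theta_d d B < lambda_d d B"
proof -
  have d0: "0 < d" using d by simp
  obtain c where c: "1/2 < c" "\<And>s. 1/2 < s \<Longrightarrow> geom_pressure s \<le> g d s * ln B \<Longrightarrow> c \<le> s"
    using lambda_set_bounded_away[OF B d0] by blast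
  have "continuous_on {1/2<..} (g d)" "continuous_on {1/2<..} (f d)"
    using continuous_on_g[OF d0] continuous_on_f[OF d0] by (auto elim: continuous_on_subset)
  then have cont: "continuous_on {1/2<..} (\<lambda>s. g d s * ln B)" "continuous_on {1/2<..} (\<lambda>s. f d s * ln B)"
    by (auto intro: continuous_on_mult_right)
  have less: "g d s * ln B < f d s * ln B" if "1/2 < s" for s
    using g_less_f[of s d] that d B by simp
  show ?thesis
    unfolding lambda_d_eq theta_d_eq
    using continuous_on_geom_pressure cont less lambda_set_nonempty[OF B d0] c
    by (rule Inf_sublevel_less)
qed

lemma lambda_d_ge_theta_d_power:
  assumes B: "1 < B" and d: "0 < d"
  shows "theta_d d (B powr ((real d + 1) / 2)) \<le> lambda_d d B"
proof -
  have "g d s * ln B \<le> f d s * ln (B powr ((real d + 1) / 2))" if "1/2 < s" for s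
  proof -
    have "g d s * ln B \<le> (real d + 1) / 2 * f d s * ln B"
      using g_le_f[of s d] that d B by (intro mult_right_mono) auto
    then show ?thesis using B by (simp add: ln_powr mult_ac)
  qed
  then have "{s. 1/2 < s \<and> geom_pressure s \<le> g d s * ln B}
      \<subseteq> {s. 1/2 < s \<and> geom_pressure s \<le> f d s * ln (B powr ((real d + 1) / 2))}"
    by (blast intro: order_trans)
  then show ?thesis
    unfolding lambda_d_eq theta_d_eq using lambda_set_nonempty[OF B d]
    by (intro cInf_superset_mono) (auto intro: bdd_belowI[of _ "1/2"])
qed

theorem mainTheorem12:
  fixes B :: real
  assumes "1 < B"
  shows "(\<forall>d::nat. 2 \<le> d \<longrightarrow> lambda_d d B > theta_d d B) \<and>
         (\<forall>d::nat. 1 \<le> d \<longrightarrow> lambda_d d B \<ge> theta_d d (B powr ((real d + 1) / 2)))"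
  using lambda_d_gt_theta_d[OF assms] lambda_d_ge_theta_d_power[OF assms] by auto

end
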